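(* Let $V\in\mathcal{C}^{\infty}(\mathbb{R}^d\setminus\{0\})$ be real-valued and let $K_V=p\cdot\partial_q-\partial_qV(q)\cdot\partial_p+\frac12(-\Delta_p+p^2)$ on $\mathbb{R}^{2d}_{q,p}$. For a locally finite smooth partition of unity $\sum_{j\ge-1}\chi_j^2(q)=1$ on $\mathbb{R}^d$, one has \[ \|K_{V}u\|^2_{L^2(\mathbb{R}^{2d})}=\sum_{j\ge-1}\Big(\|K_{V}(\chi_ju)\|^2_{L^2(\mathbb{R}^{2d})}-\|(p\cdot\partial_q\chi_j)u\|^2_{L^2(\mathbb{R}^{2d})}\Big) \] for all $u\in\mathcal{C}_0^{\infty}(\mathbb{R}^{2d})$. In particular, when the cutoffs $\chi_j$ form a dyadic partition as described below, there exists a constant $c>0$ (independent of $V$) such that \[ (1+4c)\|K_{V}u\|^2_{L^2(\mathbb{R}^{2d})}+c\|u\|^2_{L^2(\mathbb{R}^{2d})}\ge\sum_{j\ge-1}\|K_{V}(\chi_ju)\|^2_{L^2(\mathbb{R}^{2d})} \] for all $u\in\mathcal{C}_0^{\infty}(\mathbb{R}^{2d})$.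
   Context: The dyadic partition: smooth functions $\chi_j:\mathbb{R}^d\to[0,1]$, $j\ge-1$, with $\sum_{j\ge-1}\chi_j^2=1$, where $\chi_{-1}$ is supported in a fixed ball around $0$ and, for $j\ge0$, $\chi_j(q)=\tilde\chi(2^{-j}|q|)$ (for $j$ large; in general $\chi_j$ is of the form $\tilde\chi_j(2^{-j}|q|)$ with finitely many fixed profiles) supported in the shell $\{2^j\tfrac34\le|q|\le 2^j\tfrac83\}$, with $\tilde\chi\in\mathcal{C}_0^\infty(]\tfrac34,\tfrac83[)$ fixed; thus $|\partial_q\chi_j|\le C2^{-j}$ uniformly and each point lies in the support of boundedly many $\chi_j$. *)

theory Defs
  imports "HOL-Analysis.Analysis"
begin

definition dderiv :: "('a::real_normed_vector \<Rightarrow> 'b::real_normed_vector) \<Rightarrow> 'a \<Rightarrow> 'a \<Rightarrow> 'b" where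
  "dderiv f v = (\<lambda>x. frechet_derivative f (at x) v)"

definition smooth_on :: "'a::real_normed_vector set \<Rightarrow> ('a \<Rightarrow> 'b::real_normed_vector) \<Rightarrow> bool" where
  "smooth_on S f \<longleftrightarrow> open S \<and>
     (\<forall>vs. \<forall>x\<in>S. (foldr (\<lambda>v g. dderiv g v) vs f) differentiable (at x))"

definition test_fun :: "((real^'n) \<times> (real^'n) \<Rightarrow> complex) \<Rightarrow> bool" where
  "test_fun u \<longleftrightarrow> smooth_on UNIV u \<and> (\<exists>R. \<forall>z. norm z > R \<longrightarrow> u z = 0)"

definition dq :: "'n::finite \<Rightarrow> ((real^'n) \<times> (real^'n) \<Rightarrow> complex) \<Rightarrow> (real^'n) \<times> (real^'n) \<Rightarrow> complex" where
  "dq i u = dderiv u (axis i 1, 0)"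
definition dp :: "'n::finite \<Rightarrow> ((real^'n) \<times> (real^'n) \<Rightarrow> complex) \<Rightarrow> (real^'n) \<times> (real^'n) \<Rightarrow> complex" where
  "dp i u = dderiv u (0, axis i 1)"

definition KV :: "(real^'n::finite \<Rightarrow> real) \<Rightarrow> ((real^'n) \<times> (real^'n) \<Rightarrow> complex) \<Rightarrow> (real^'n) \<times> (real^'n) \<Rightarrow> complex" where
  "KV V u = (\<lambda>(q,p).
      (\<Sum>i\<in>UNIV. complex_of_real (p$i) * dq i u (q,p))
    - (\<Sum>i\<in>UNIV. complex_of_real (dderiv V (axis i 1) q) * dp i u (q,p))
    + (1/2) * ( - (\<Sum>i\<in>UNIV. dp i (dp i u) (q,p)) + complex_of_real ((norm p)^2) * u (q,p)))"

definition L2sq :: "((real^'n::finite) \<times> (real^'n) \<Rightarrow> complex) \<Rightarrow> ennreal" where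
  "L2sq f = (\<integral>\<^sup>+ z. ennreal ((cmod (f z))^2) \<partial>lborel)"

definition cutmul :: "(real^'n::finite \<Rightarrow> real) \<Rightarrow> ((real^'n) \<times> (real^'n) \<Rightarrow> complex) \<Rightarrow> (real^'n) \<times> (real^'n) \<Rightarrow> complex" where
  "cutmul chi u = (\<lambda>(q,p). complex_of_real (chi q) * u (q,p))"

definition comm_term :: "(real^'n::finite \<Rightarrow> real) \<Rightarrow> ((real^'n) \<times> (real^'n) \<Rightarrow> complex) \<Rightarrow> (real^'n) \<times> (real^'n) \<Rightarrow> complex" where
  "comm_term chi u = (\<lambda>(q,p). complex_of_real (\<Sum>i\<in>UNIV. p$i * dderiv chi (axis i 1) q) * u (q,p))"

definition sq_partition :: "(int \<Rightarrow> real^'n::finite \<Rightarrow> real) \<Rightarrow> bool" where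
  "sq_partition chi \<longleftrightarrow>
     (\<forall>j\<ge>-1. smooth_on UNIV (chi j)) \<and>
     (\<forall>q. \<exists>U. open U \<and> q \<in> U \<and> finite {j. j \<ge> -1 \<and> (\<exists>x\<in>U. chi j x \<noteq> 0)}) \<and>
     (\<forall>q. ((\<lambda>j. (chi j q)^2) has_sum 1) {-1..})"

definition dyadic_partition :: "(int \<Rightarrow> real^'n::finite \<Rightarrow> real) \<Rightarrow> bool" where
  "dyadic_partition chi \<longleftrightarrow>
     sq_partition chi \<and>
     (\<forall>j\<ge>-1. \<forall>q. 0 \<le> chi j q \<and> chi j q \<le> 1) \<and>
     (\<exists>R. \<forall>q. norm q > R \<longrightarrow> chi (-1) q = 0) \<and>
     (\<exists>P::(real \<Rightarrow> real) set. finite P \<and>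
        (\<forall>\<phi>\<in>P. smooth_on UNIV \<phi> \<and>
            (\<exists>a b. 3/4 < a \<and> b < 8/3 \<and> (\<forall>t. t \<notin> {a..b} \<longrightarrow> \<phi> t = 0))) \<and>
        (\<forall>j\<ge>0. \<exists>\<phi>\<in>P. \<forall>q. chi j q = \<phi> (2 powr (- real_of_int j) * norm q)))"

end

theory Submission
  imports Defs
begin

text \<open>Every cutoff depends on \<open>q\<close> only, so \<open>K_V (\<chi> u) = \<chi> K_V u + (p \<cdot> \<partial>\<^sub>q\<chi>) u\<close>.
  Expanding \<open>|K_V (\<chi>\<^sub>j u)|\<^sup>2\<close> and summing over \<open>j\<close>, the cross terms carry the factor
  \<open>\<Sum>\<^sub>j \<chi>\<^sub>j \<partial>\<^sub>q\<chi>\<^sub>j = \<partial>\<^sub>q(\<Sum>\<^sub>j \<chi>\<^sub>j\<^sup>2)/2 = 0\<close>, so the localization identity holds pointwise in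
  \<open>(q,p)\<close>, before any integration.

  For a dyadic partition \<open>|\<partial>\<^sub>q\<chi>\<^sub>j| = O(2\<^sup>-\<^sup>j)\<close>, hence \<open>\<Sum>\<^sub>j |p \<cdot> \<partial>\<^sub>q\<chi>\<^sub>j|\<^sup>2 \<le> C |p|\<^sup>2\<close>. Finally
  \<open>\<parallel>p u\<parallel>\<^sup>2 \<le> 2 Re \<langle>K_V u, u\<rangle> \<le> \<parallel>K_V u\<parallel>\<^sup>2 + \<parallel>u\<parallel>\<^sup>2\<close>: integrating by parts, the transport
  terms \<open>p \<cdot> \<partial>\<^sub>q\<close> and \<open>\<partial>\<^sub>qV \<cdot> \<partial>\<^sub>p\<close> contribute nothing and \<open>-\<Delta>\<^sub>p\<close> contributes \<open>\<parallel>\<partial>\<^sub>pu\<parallel>\<^sup>2 \<ge> 0\<close>;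
  this is why the constant does not depend on \<open>V\<close>.\<close>

section \<open>Directional derivatives\<close>

lemma smooth_on_dderiv: "smooth_on S f \<Longrightarrow> smooth_on S (dderiv f v)"
  unfolding smooth_on_def
proof safe
  fix vs x assume "\<forall>vs. \<forall>x\<in>S. foldr (\<lambda>v g. dderiv g v) vs f differentiable at x" "x \<in> S"
  then have "foldr (\<lambda>v g. dderiv g v) (vs @ [v]) f differentiable at x" by blast
  then show "foldr (\<lambda>v g. dderiv g v) vs (dderiv f v) differentiable at x" by simp
qed

lemma smooth_on_imp_differentiable: "smooth_on S f \<Longrightarrow> x \<in> S \<Longrightarrow> f differentiable (at x)"
  unfolding smooth_on_def by (metis foldr_Nil id_apply)

lemma smooth_on_imp_continuous_on: "smooth_on S f \<Longrightarrow> continuous_on S f"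
  by (meson continuous_at_imp_continuous_on differentiable_imp_continuous_within
      smooth_on_imp_differentiable)

lemma continuous_on_dderiv: "smooth_on S f \<Longrightarrow> continuous_on S (dderiv f v)"
  using smooth_on_imp_continuous_on smooth_on_dderiv by blast

lemma has_derivative_imp_dderiv: "(f has_derivative f') (at x) \<Longrightarrow> dderiv f v x = f' v"
  unfolding dderiv_def using frechet_derivative_at by metis

lemma has_derivative_dderiv:
  "f differentiable (at x) \<Longrightarrow> (f has_derivative (\<lambda>v. dderiv f v x)) (at x)"
  unfolding dderiv_def using frechet_derivative_works by blast

lemma dderiv_linear: "f differentiable (at x) \<Longrightarrow> linear (\<lambda>v. dderiv f v x)"
  using has_derivative_dderiv has_derivative_linear by blast

lemma dderiv_eq_0_if_locally_0:
  assumes "open U" "x \<in> U" "\<And>y. y \<in> U \<Longrightarrow> f y = 0"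
  shows "dderiv f v x = 0"
proof -
  have "((\<lambda>y. 0) has_derivative (\<lambda>h. 0)) (at x)" by simp
  then have "(f has_derivative (\<lambda>h. 0)) (at x)"
    by (rule has_derivative_transform_within_open[OF _ assms(1,2)]) (use assms(3) in auto)
  then show ?thesis by (rule has_derivative_imp_dderiv)
qed

lemma dderiv_eq_sum_axis:
  fixes f :: "real^'n::finite \<Rightarrow> real"
  assumes "f differentiable (at x)"
  shows "dderiv f p x = (\<Sum>i\<in>UNIV. p$i * dderiv f (axis i 1) x)"
proof -
  have "dderiv f p x = dderiv f (\<Sum>i\<in>UNIV. p$i *\<^sub>R axis i 1) x"
    using basis_expansion[of p] by (simp add: scalar_mult_eq_scaleR)
  also have "\<dots> = (\<Sum>i\<in>UNIV. p$i * dderiv f (axis i 1) x)"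
    by (simp add: linear_sum[OF dderiv_linear[OF assms]] linear_scale[OF dderiv_linear[OF assms]])
  finally show ?thesis .
qed

section \<open>Cutoffs in the position variable\<close>

lemma cutmul_apply: "cutmul chi g z = complex_of_real (chi (fst z)) * g z"
  by (simp add: cutmul_def split: prod.splits)

lemma dderiv_cutmul:
  assumes "chi differentiable (at (fst z))" "g differentiable (at z)"
  shows "dderiv (cutmul chi g) v z
           = complex_of_real (chi (fst z)) * dderiv g v z + complex_of_real (dderiv chi (fst v) (fst z)) * g z"
proof -
  have "((\<lambda>z. chi (fst z)) has_derivative (\<lambda>h. dderiv chi (fst h) (fst z))) (at z)"
    using has_derivative_compose[OF has_derivative_fst[OF has_derivative_ident]
        has_derivative_dderiv[OF assms(1)]] by simp
  from has_derivative_mult[OF has_derivative_of_real[OF this] has_derivative_dderiv[OF assms(2)]]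
  show ?thesis
    unfolding cutmul_apply[abs_def] by (rule has_derivative_imp_dderiv[THEN trans]) simp
qed

lemma dp_cutmul:
  fixes chi :: "real^'n::finite \<Rightarrow> real"
  assumes "\<And>q. chi differentiable (at q)" "\<And>z. g differentiable (at z)"
  shows "dp i (cutmul chi g) = cutmul chi (dp i g)"
proof
  fix z :: "(real^'n) \<times> (real^'n)"
  have "dderiv chi 0 (fst z) = 0" using linear_0[OF dderiv_linear[OF assms(1)]] .
  then show "dp i (cutmul chi g) z = cutmul chi (dp i g) z"
    unfolding dp_def using dderiv_cutmul[of chi z g "(0, axis i 1)"] assms by (simp add: cutmul_apply)
qed

lemma dq_cutmul:
  assumes "\<And>q. chi differentiable (at q)" "\<And>z. g differentiable (at z)"
  shows "dq i (cutmul chi g) z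
           = complex_of_real (chi (fst z)) * dq i g z + complex_of_real (dderiv chi (axis i 1) (fst z)) * g z"
  unfolding dq_def using dderiv_cutmul[of chi z g "(axis i 1, 0)"] assms by simp

lemma KV_apply: "KV V u z =
      (\<Sum>i\<in>UNIV. complex_of_real (snd z$i) * dq i u z)
    - (\<Sum>i\<in>UNIV. complex_of_real (dderiv V (axis i 1) (fst z)) * dp i u z)
    + (1/2) * (- (\<Sum>i\<in>UNIV. dp i (dp i u) z) + complex_of_real ((norm (snd z))^2) * u z)"
  by (simp add: KV_def split: prod.splits)

lemma comm_term_apply:
  "comm_term chi u z = complex_of_real (\<Sum>i\<in>UNIV. snd z$i * dderiv chi (axis i 1) (fst z)) * u z"
  by (simp add: comm_term_def split: prod.splits)

lemma comm_term_eq_dderiv: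
  "chi differentiable (at (fst z)) \<Longrightarrow> comm_term chi u z = complex_of_real (dderiv chi (snd z) (fst z)) * u z"
  unfolding comm_term_apply by (simp add: dderiv_eq_sum_axis)

lemma KV_cutmul:
  fixes chi :: "real^'n::finite \<Rightarrow> real"
  assumes "\<And>q. chi differentiable (at q)" "smooth_on UNIV u"
  shows "KV V (cutmul chi u) z = complex_of_real (chi (fst z)) * KV V u z + comm_term chi u z"
proof -
  have du: "\<And>z. u differentiable (at z)" "\<And>z. dp i u differentiable (at z)" for i
    using assms(2) smooth_on_dderiv smooth_on_imp_differentiable unfolding dp_def by blast+
  show ?thesis
    unfolding KV_apply comm_term_apply dq_cutmul[OF assms(1) du(1)]
      dp_cutmul[OF assms(1) du(1)] dp_cutmul[OF assms(1) du(2)]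
    by (simp add: cutmul_apply algebra_simps sum_distrib_left sum.distrib sum_distrib_right)
qed

section \<open>Square partitions of unity\<close>

lemma sum_mult_dderiv_eq_0:
  fixes f :: "'i \<Rightarrow> 'a::real_normed_vector \<Rightarrow> real"
  assumes "finite F" "open U" "q \<in> U" "\<And>j. j \<in> F \<Longrightarrow> f j differentiable (at q)"
    and "\<And>x. x \<in> U \<Longrightarrow> (\<Sum>j\<in>F. (f j x)^2) = 1"
  shows "(\<Sum>j\<in>F. f j q * dderiv (f j) v q) = 0"
proof -
  have "(f j has_derivative (\<lambda>h. dderiv (f j) h q)) (at q)" if "j \<in> F" for j
    using has_derivative_dderiv assms(4) that by blast
  then have d: "((\<lambda>x. \<Sum>j\<in>F. f j x * f j x) has_derivative
      (\<lambda>h. \<Sum>j\<in>F. f j q * dderiv (f j) h q + dderiv (f j) h q * f j q)) (at q)"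
    by (intro has_derivative_sum has_derivative_mult)
  have "((\<lambda>x. \<Sum>j\<in>F. f j x * f j x) has_derivative (\<lambda>h. 0)) (at q)"
    by (rule has_derivative_transform_within_open[OF has_derivative_const assms(2,3)])
       (use assms(5) in \<open>simp add: power2_eq_square\<close>)
  from has_derivative_unique[OF d this]
  have "(\<Sum>j\<in>F. f j q * dderiv (f j) v q + dderiv (f j) v q * f j q) = 0"
    by meson
  then have "2 * (\<Sum>j\<in>F. f j q * dderiv (f j) v q) = 0"
    by (simp add: sum.distrib sum_distrib_left mult.commute)
  then show ?thesis by simp
qed

lemma sq_partition_local:
  fixes chi :: "int \<Rightarrow> real^'n::finite \<Rightarrow> real"
  assumes sq: "sq_partition chi"
  obtains U F where "open U" "q \<in> U" "finite F" "F \<subseteq> {-1..}"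
    "\<And>j x. j \<in> {-1..} - F \<Longrightarrow> x \<in> U \<Longrightarrow> chi j x = 0"
    "\<And>x. x \<in> U \<Longrightarrow> (\<Sum>j\<in>F. (chi j x)^2) = 1"
    "\<And>v. (\<Sum>j\<in>F. chi j q * dderiv (chi j) v q) = 0"
    "\<And>j v. j \<in> {-1..} - F \<Longrightarrow> dderiv (chi j) v q = 0"
proof -
  from sq obtain U where U: "open U" "q \<in> U"
    and fin: "finite {j. j \<ge> -1 \<and> (\<exists>x\<in>U. chi j x \<noteq> 0)}"
    unfolding sq_partition_def by blast
  define F where "F = {j. j \<ge> -1 \<and> (\<exists>x\<in>U. chi j x \<noteq> 0)}"
  have F: "finite F" "F \<subseteq> {-1..}" using fin by (auto simp: F_def)
  have vanish: "chi j x = 0" if "j \<in> {-1..} - F" "x \<in> U" for j x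
    using that by (auto simp: F_def)
  have sum1: "(\<Sum>j\<in>F. (chi j x)^2) = 1" if "x \<in> U" for x
  proof -
    have "((\<lambda>j. (chi j x)^2) has_sum 1) {-1..}" using sq unfolding sq_partition_def by blast
    then have "((\<lambda>j. (chi j x)^2) has_sum 1) F"
      by (subst (asm) has_sum_cong_neutral[where T=F and g="\<lambda>j. (chi j x)^2"])
         (use vanish that F in auto)
    then show ?thesis using F(1) has_sum_finite has_sum_unique by blast
  qed
  have "chi j differentiable (at q)" if "j \<in> F" for j
    using sq F that smooth_on_imp_differentiable unfolding sq_partition_def by blast
  then have "(\<Sum>j\<in>F. chi j q * dderiv (chi j) v q) = 0" for v
    by (rule sum_mult_dderiv_eq_0[OF F(1) U]) (use sum1 in auto)
  moreover have "dderiv (chi j) v q = 0" if "j \<in> {-1..} - F" for j v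
    using dderiv_eq_0_if_locally_0[OF U] vanish that by blast
  ultimately show ?thesis using that U F vanish sum1 by blast
qed

lemma sum_cmod_square_combination:
  fixes c a :: "'i \<Rightarrow> real"
  assumes "(\<Sum>j\<in>F. (c j)^2) = 1" "(\<Sum>j\<in>F. c j * a j) = 0"
  shows "(\<Sum>j\<in>F. (cmod (complex_of_real (c j) * K + complex_of_real (a j) * w))^2)
           = (cmod K)^2 + (\<Sum>j\<in>F. (a j)^2 * (cmod w)^2)"
proof -
  have "(cmod (complex_of_real (c j) * K + complex_of_real (a j) * w))^2
      = (c j)^2 * (cmod K)^2 + (a j)^2 * (cmod w)^2 + 2 * Re (cnj K * w) * (c j * a j)" for j
    unfolding cmod_power2 by (simp add: power2_eq_square algebra_simps)
  then have "(\<Sum>j\<in>F. (cmod (complex_of_real (c j) * K + complex_of_real (a j) * w))^2)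
      = (\<Sum>j\<in>F. (c j)^2) * (cmod K)^2 + (\<Sum>j\<in>F. (a j)^2 * (cmod w)^2)
        + 2 * Re (cnj K * w) * (\<Sum>j\<in>F. c j * a j)"
    by (simp add: sum.distrib sum_distrib_left sum_distrib_right)
  then show ?thesis using assms by simp
qed

lemma infsum_cmod_KV_cutmul:
  fixes chi :: "int \<Rightarrow> real^'n::finite \<Rightarrow> real"
  assumes sq: "sq_partition chi" and u: "smooth_on UNIV u"
  shows "ennreal ((cmod (KV V u z))^2) + (\<Sum>\<^sub>\<infinity>j\<in>{-1..}. ennreal ((cmod (comm_term (chi j) u z))^2))
       = (\<Sum>\<^sub>\<infinity>j\<in>{-1..}. ennreal ((cmod (KV V (cutmul (chi j) u) z))^2))"
proof (rule sq_partition_local[OF sq, of "fst z"])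
  fix U F assume U: "open U" "fst z \<in> U" and F: "finite F" "F \<subseteq> {-1..}"
    and vanish: "\<And>j x. j \<in> {-1..} - F \<Longrightarrow> x \<in> U \<Longrightarrow> chi j x = 0"
    and sum1: "\<And>x. x \<in> U \<Longrightarrow> (\<Sum>j\<in>F. (chi j x)^2) = 1"
    and sum0: "\<And>v. (\<Sum>j\<in>F. chi j (fst z) * dderiv (chi j) v (fst z)) = 0"
    and dvanish: "\<And>j v. j \<in> {-1..} - F \<Longrightarrow> dderiv (chi j) v (fst z) = 0"
  define a where "a j = dderiv (chi j) (snd z) (fst z)" for j
  have diff: "chi j differentiable (at x)" if "j \<in> {-1..}" for j x
    using sq that smooth_on_imp_differentiable unfolding sq_partition_def by auto
  have comm: "comm_term (chi j) u z = complex_of_real (a j) * u z" if "j \<in> {-1..}" for j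
    using comm_term_eq_dderiv[OF diff[OF that]] by (simp add: a_def)
  have "(\<Sum>\<^sub>\<infinity>j\<in>{-1..}. ennreal ((cmod (comm_term (chi j) u z))^2))
      = (\<Sum>j\<in>F. ennreal ((a j)^2 * (cmod (u z))^2))"
    by (subst infsum_cong_neutral[where T=F])
       (use F comm dvanish in \<open>auto simp: a_def norm_mult power_mult_distrib\<close>)
  moreover have "(\<Sum>\<^sub>\<infinity>j\<in>{-1..}. ennreal ((cmod (KV V (cutmul (chi j) u) z))^2))
      = (\<Sum>j\<in>F. ennreal ((cmod (complex_of_real (chi j (fst z)) * KV V u z
                                   + complex_of_real (a j) * u z))^2))"
    by (subst infsum_cong_neutral[where T=F])
       (use F comm dvanish vanish U in \<open>auto simp: a_def KV_cutmul[OF diff u]\<close>)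
  moreover have "(\<Sum>j\<in>F. (cmod (complex_of_real (chi j (fst z)) * KV V u z + complex_of_real (a j) * u z))^2)
      = (cmod (KV V u z))^2 + (\<Sum>j\<in>F. (a j)^2 * (cmod (u z))^2)"
    unfolding a_def by (rule sum_cmod_square_combination[OF sum1[OF U(2)] sum0])
  ultimately show ?thesis by (simp add: sum_nonneg)
qed

section \<open>Measurability and countable sums of integrals\<close>

lemma infsum_ennreal_eq_suminf:
  fixes f :: "'a \<Rightarrow> ennreal"
  assumes "bij_betw g UNIV A"
  shows "(\<Sum>\<^sub>\<infinity>j\<in>A. f j) = (\<Sum>n. f (g n))"
proof -
  have "(\<Sum>\<^sub>\<infinity>j\<in>A. f j) = (\<Sum>\<^sub>\<infinity>n\<in>UNIV. f (g n))"
    using infsum_reindex_bij_betw[OF assms, of f] by simp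
  also have "\<dots> = (\<Sum>n. f (g n))"
  proof -
    have "((\<lambda>n. f (g n)) has_sum (\<Sum>\<^sub>\<infinity>n\<in>UNIV. f (g n))) UNIV"
      by (rule has_sum_infsum, rule nonneg_summable_on_complete) simp
    then show ?thesis by (metis has_sum_imp_sums sums_unique)
  qed
  finally show ?thesis .
qed

lemma borel_measurable_infsum_ennreal:
  fixes f :: "'i \<Rightarrow> 'a \<Rightarrow> ennreal"
  assumes "countable A" "\<And>j. j \<in> A \<Longrightarrow> f j \<in> borel_measurable M"
  shows "(\<lambda>x. \<Sum>\<^sub>\<infinity>j\<in>A. f j x) \<in> borel_measurable M"
proof (cases "finite A")
  case False
  then have g: "bij_betw (from_nat_into A) UNIV A" using bij_betw_from_nat_into assms(1) by blast
  have "f (from_nat_into A n) \<in> borel_measurable M" for n using assms(2) g bij_betwE by blast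
  then show ?thesis unfolding infsum_ennreal_eq_suminf[OF g] by measurable
qed (use assms(2) in simp)

lemma nn_integral_infsum:
  fixes f :: "'i \<Rightarrow> 'a \<Rightarrow> ennreal"
  assumes "countable A" "\<And>j. j \<in> A \<Longrightarrow> f j \<in> borel_measurable M"
  shows "(\<integral>\<^sup>+x. (\<Sum>\<^sub>\<infinity>j\<in>A. f j x) \<partial>M) = (\<Sum>\<^sub>\<infinity>j\<in>A. integral\<^sup>N M (f j))"
proof (cases "finite A")
  case False
  then have g: "bij_betw (from_nat_into A) UNIV A" using bij_betw_from_nat_into assms(1) by blast
  have "f (from_nat_into A n) \<in> borel_measurable M" for n using assms(2) g bij_betwE by blast
  then show ?thesis unfolding infsum_ennreal_eq_suminf[OF g] by (rule nn_integral_suminf)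
qed (use assms(2) in \<open>simp add: nn_integral_sum\<close>)

lemma borel_measurable_continuous_on_compl_point:
  fixes g :: "'a::euclidean_space \<Rightarrow> 'b::euclidean_space"
  assumes "continuous_on (UNIV - {a}) g"
  shows "g \<in> borel_measurable borel"
proof -
  have "(\<lambda>x. indicator (UNIV - {a}) x *\<^sub>R g x + indicator {a} x *\<^sub>R g a) \<in> borel_measurable borel"
    by (intro borel_measurable_add borel_measurable_continuous_on_indicator) (use assms in auto)
  moreover have "g = (\<lambda>x. indicator (UNIV - {a}) x *\<^sub>R g x + indicator {a} x *\<^sub>R g a)"
    by (auto simp: fun_eq_iff indicator_def)
  ultimately show ?thesis by simp
qed

lemma borel_measurable_comp_fst:
  fixes g :: "'a::euclidean_space \<Rightarrow> 'c::euclidean_space"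
  assumes "g \<in> borel_measurable borel"
  shows "(\<lambda>z::'a \<times> 'b::euclidean_space. g (fst z)) \<in> borel_measurable lborel"
  unfolding measurable_lborel2
  by (rule measurable_compose[OF borel_measurable_continuous_onI[OF continuous_on_fst[OF continuous_on_id]] assms])

lemma borel_measurable_lborel_continuous: "continuous_on UNIV f \<Longrightarrow> f \<in> borel_measurable lborel"
  by (simp add: borel_measurable_continuous_onI)

lemma borel_measurable_KV:
  fixes V :: "real^'n::finite \<Rightarrow> real"
  assumes V: "smooth_on (UNIV - {0}) V" and u: "smooth_on UNIV u"
  shows "KV V u \<in> borel_measurable lborel"
proof -
  have [measurable]: "(\<lambda>z::(real^'n)\<times>(real^'n). dderiv V (axis i 1) (fst z)) \<in> borel_measurable lborel" for i
    by (rule borel_measurable_comp_fst, rule borel_measurable_continuous_on_compl_point[of 0],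
        rule continuous_on_dderiv[OF V])
  have [measurable]: "u \<in> borel_measurable lborel" "dq i u \<in> borel_measurable lborel"
    "dp i u \<in> borel_measurable lborel" "dp i (dp i u) \<in> borel_measurable lborel" for i
    unfolding dq_def dp_def
    by (intro borel_measurable_lborel_continuous continuous_on_dderiv smooth_on_dderiv
        smooth_on_imp_continuous_on u)+
  have [measurable]: "(\<lambda>z::(real^'n)\<times>(real^'n). snd z $ i) \<in> borel_measurable lborel"
    "(\<lambda>z::(real^'n)\<times>(real^'n). norm (snd z)) \<in> borel_measurable lborel" for i
    by (intro borel_measurable_lborel_continuous continuous_intros)+
  show ?thesis unfolding KV_apply[abs_def] by measurable
qed

lemma borel_measurable_comm_term:
  fixes chi :: "real^'n::finite \<Rightarrow> real"
  assumes chi: "smooth_on UNIV chi" and u: "smooth_on UNIV u"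
  shows "comm_term chi u \<in> borel_measurable lborel"
proof -
  have [measurable]: "(\<lambda>z::(real^'n)\<times>(real^'n). dderiv chi (axis i 1) (fst z)) \<in> borel_measurable lborel"
    "(\<lambda>z::(real^'n)\<times>(real^'n). snd z $ i) \<in> borel_measurable lborel" for i
    by (intro borel_measurable_comp_fst borel_measurable_continuous_onI continuous_on_dderiv chi
        borel_measurable_lborel_continuous continuous_intros)+
  have [measurable]: "u \<in> borel_measurable lborel"
    by (intro borel_measurable_lborel_continuous smooth_on_imp_continuous_on u)
  show ?thesis unfolding comm_term_apply[abs_def] by measurable
qed

lemma borel_measurable_KV_cutmul:
  fixes V :: "real^'n::finite \<Rightarrow> real"
  assumes V: "smooth_on (UNIV - {0}) V" and u: "smooth_on UNIV u" and chi: "smooth_on UNIV chi"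
  shows "KV V (cutmul chi u) \<in> borel_measurable lborel"
proof -
  have [measurable]: "(\<lambda>z::(real^'n)\<times>(real^'n). chi (fst z)) \<in> borel_measurable lborel"
    by (intro borel_measurable_comp_fst borel_measurable_continuous_onI smooth_on_imp_continuous_on chi)
  have [measurable]: "KV V u \<in> borel_measurable lborel" "comm_term chi u \<in> borel_measurable lborel"
    using borel_measurable_KV[OF V u] borel_measurable_comm_term[OF chi u] .
  have "KV V (cutmul chi u) = (\<lambda>z. complex_of_real (chi (fst z)) * KV V u z + comm_term chi u z)"
    using KV_cutmul[OF _ u] smooth_on_imp_differentiable[OF chi] by auto
  then show ?thesis by simp
qed

lemma borel_measurable_cmod_square:
  "f \<in> borel_measurable lborel \<Longrightarrow> (\<lambda>z. ennreal ((cmod (f z))^2)) \<in> borel_measurable lborel"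
  unfolding measurable_lborel2 by measurable

theorem L2sq_KV_sum_cutmul:
  fixes V :: "real^'n::finite \<Rightarrow> real" and chi :: "int \<Rightarrow> real^'n \<Rightarrow> real"
  assumes V: "smooth_on (UNIV - {0}) V" and sq: "sq_partition chi" and u: "test_fun u"
  shows "L2sq (KV V u) + (\<Sum>\<^sub>\<infinity>j\<in>{-1..}. L2sq (comm_term (chi j) u))
          = (\<Sum>\<^sub>\<infinity>j\<in>{-1..}. L2sq (KV V (cutmul (chi j) u)))"
proof -
  have u: "smooth_on UNIV u" using u unfolding test_fun_def by blast
  have chi: "smooth_on UNIV (chi j)" if "j \<in> {-1..}" for j
    using sq that unfolding sq_partition_def by auto
  have mK: "(\<lambda>z. ennreal ((cmod (KV V u z))^2)) \<in> borel_measurable lborel"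
    by (intro borel_measurable_cmod_square borel_measurable_KV V u)
  have mC: "(\<lambda>z. ennreal ((cmod (comm_term (chi j) u z))^2)) \<in> borel_measurable lborel"
    and mKC: "(\<lambda>z. ennreal ((cmod (KV V (cutmul (chi j) u) z))^2)) \<in> borel_measurable lborel"
    if "j \<in> {-1..}" for j
    by (intro borel_measurable_cmod_square borel_measurable_comm_term borel_measurable_KV_cutmul
        V u chi that)+
  have "L2sq (KV V u) + (\<Sum>\<^sub>\<infinity>j\<in>{-1..}. L2sq (comm_term (chi j) u))
      = (\<integral>\<^sup>+z. ennreal ((cmod (KV V u z))^2) \<partial>lborel)
        + (\<integral>\<^sup>+z. (\<Sum>\<^sub>\<infinity>j\<in>{-1..}. ennreal ((cmod (comm_term (chi j) u z))^2)) \<partial>lborel)"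
    unfolding L2sq_def by (subst nn_integral_infsum[OF _ mC]) auto
  also have "\<dots> = (\<integral>\<^sup>+z. ennreal ((cmod (KV V u z))^2)
           + (\<Sum>\<^sub>\<infinity>j\<in>{-1..}. ennreal ((cmod (comm_term (chi j) u z))^2)) \<partial>lborel)"
    by (rule nn_integral_add[symmetric, OF mK borel_measurable_infsum_ennreal[OF _ mC]]) auto
  also have "\<dots> = (\<integral>\<^sup>+z. (\<Sum>\<^sub>\<infinity>j\<in>{-1..}. ennreal ((cmod (KV V (cutmul (chi j) u) z))^2)) \<partial>lborel)"
    by (simp add: infsum_cmod_KV_cutmul[OF sq u])
  also have "\<dots> = (\<Sum>\<^sub>\<infinity>j\<in>{-1..}. L2sq (KV V (cutmul (chi j) u)))"
    unfolding L2sq_def by (rule nn_integral_infsum[OF _ mKC]) simp_all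
  finally show ?thesis .
qed

section \<open>Integration by parts\<close>

lemma continuous_compact_support_bounded:
  fixes g :: "'a::euclidean_space \<Rightarrow> real"
  assumes "continuous_on UNIV g" "\<And>z. norm z > R \<Longrightarrow> g z = 0"
  obtains M where "M \<ge> 0" "\<And>z. \<bar>g z\<bar> \<le> M"
proof -
  have "bounded (g ` cball 0 R)"
    using assms(1) by (intro compact_imp_bounded compact_continuous_image) (auto intro: continuous_on_subset)
  then obtain M where M: "\<And>x. x \<in> cball 0 R \<Longrightarrow> \<bar>g x\<bar> \<le> M"
    unfolding bounded_iff by (metis image_eqI real_norm_def)
  show ?thesis
  proof (rule that[of "max M 0"])
    show "\<bar>g z\<bar> \<le> max M 0" for z
      using M[of z] assms(2)[of z] by (cases "norm z \<le> R") auto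
  qed auto
qed

lemma integrable_bounded_support:
  fixes g :: "'a::euclidean_space \<Rightarrow> real"
  assumes "g \<in> borel_measurable lborel" "\<And>z. \<bar>g z\<bar> \<le> K * indicator (cball 0 B) z"
  shows "integrable lborel g"
proof (rule Bochner_Integration.integrable_bound[OF _ assms(1)])
  show "integrable lborel (\<lambda>x. indicator (cball (0::'a) B) x *\<^sub>R K)"
    by (rule borel_integrable_compact) auto
  have "norm (g x) \<le> norm (indicator (cball (0::'a) B) x *\<^sub>R K)" for x
    using assms(2)[of x] by (cases "x \<in> cball 0 B") auto
  then show "AE x in lborel. norm (g x) \<le> norm (indicator (cball (0::'a) B) x *\<^sub>R K)"
    by simp
qed

lemma integrable_continuous_compact_support:
  fixes g :: "'a::euclidean_space \<Rightarrow> real"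
  assumes "continuous_on UNIV g" "\<And>z. norm z > R \<Longrightarrow> g z = 0"
  shows "integrable lborel g"
proof -
  obtain M where "M \<ge> 0" "\<And>z. \<bar>g z\<bar> \<le> M"
    using continuous_compact_support_bounded[OF assms] by blast
  then show ?thesis
    using assms by (intro integrable_bounded_support[where K=M and B=R] borel_measurable_lborel_continuous)
      (auto simp: indicator_def not_le)
qed

lemma has_real_derivative_along_line:
  assumes "f differentiable (at (z + x *\<^sub>R e))"
  shows "((\<lambda>s. f (z + s *\<^sub>R e)) has_real_derivative dderiv f e (z + x *\<^sub>R e)) (at x)"
proof -
  have "((\<lambda>s. z + s *\<^sub>R e) has_derivative (\<lambda>s. s *\<^sub>R e)) (at x)"
    by (auto intro!: derivative_eq_intros)
  from has_derivative_compose[OF this has_derivative_dderiv[OF assms]]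
  have "((\<lambda>s. f (z + s *\<^sub>R e)) has_derivative (\<lambda>s. dderiv f (s *\<^sub>R e) (z + x *\<^sub>R e))) (at x)" .
  moreover have "(\<lambda>s. dderiv f (s *\<^sub>R e) (z + x *\<^sub>R e)) = (*) (dderiv f e (z + x *\<^sub>R e))"
    using linear_scale[OF dderiv_linear[OF assms]] by (simp add: fun_eq_iff mult.commute)
  ultimately show ?thesis unfolding has_field_derivative_def by simp
qed

lemma abs_difference_quotient_le:
  fixes f :: "'a::real_normed_vector \<Rightarrow> real"
  assumes f: "\<And>z. f differentiable (at z)" and M: "\<And>z. \<bar>dderiv f e z\<bar> \<le> M" and t: "t > 0"
  shows "\<bar>f (z + t *\<^sub>R e) - f z\<bar> \<le> M * t"
proof -
  obtain \<xi> where "f (z + t *\<^sub>R e) - f (z + 0 *\<^sub>R e) = (t - 0) * dderiv f e (z + \<xi> *\<^sub>R e)"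
    using MVT2[OF t has_real_derivative_along_line[OF f]] by blast
  then show ?thesis using M[of "z + \<xi> *\<^sub>R e"] t by (simp add: abs_mult mult.commute mult_left_mono)
qed

lemma difference_quotient_tendsto_dderiv:
  fixes f :: "'a::real_normed_vector \<Rightarrow> real"
  assumes f: "f differentiable (at z)" and t: "filterlim t (at 0) F"
  shows "((\<lambda>n. (f (z + t n *\<^sub>R e) - f z) / t n) \<longlongrightarrow> dderiv f e z) F"
proof -
  have "((\<lambda>s. (f (z + s *\<^sub>R e) - f z) / s) \<longlongrightarrow> dderiv f e z) (at 0)"
    using has_real_derivative_along_line[of f z 0 e] f unfolding has_field_derivative_iff by simp
  from filterlim_compose[OF this t] show ?thesis by simp
qed

lemma integral_mult_translate:
  fixes g h :: "'a::euclidean_space \<Rightarrow> real"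
  assumes "h \<in> borel_measurable borel" "g \<in> borel_measurable borel" "\<And>z t. h (z + t *\<^sub>R e) = h z"
  shows "(\<integral>z. h z * g (z + c *\<^sub>R e) \<partial>lborel) = (\<integral>z. h z * g z \<partial>lborel)"
proof -
  have "(\<integral>z. h z * g (z + c *\<^sub>R e) \<partial>lborel) = (\<integral>z. (\<lambda>y. h y * g y) (c *\<^sub>R e + z) \<partial>lborel)"
    using assms(3) by (simp add: add.commute)
  also have "\<dots> = (\<integral>z. h z * g z \<partial>distr lborel borel ((+) (c *\<^sub>R e)))"
    using assms(1,2) by (subst integral_distr) auto
  also have "\<dots> = (\<integral>z. h z * g z \<partial>lborel)"
    by (simp add: lborel_distr_plus)
  finally show ?thesis .
qed

definition C1_compactly_supported :: "('a::real_normed_vector \<Rightarrow> real) \<Rightarrow> bool" where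
  "C1_compactly_supported f \<longleftrightarrow> (\<forall>z. f differentiable (at z)) \<and> (\<forall>e. continuous_on UNIV (dderiv f e))
     \<and> (\<exists>R. \<forall>z. norm z > R \<longrightarrow> f z = 0)"

lemma C1_compactly_supported_bounds:
  fixes f :: "'a::euclidean_space \<Rightarrow> real"
  assumes "C1_compactly_supported f"
  obtains B M where "M \<ge> 0" "\<And>z. \<bar>f z\<bar> \<le> M" "\<And>z. \<bar>dderiv f e z\<bar> \<le> M"
    "\<And>z c. \<bar>c\<bar> \<le> 1 \<Longrightarrow> norm z > B \<Longrightarrow> f (z + c *\<^sub>R e) = 0"
proof -
  obtain R where R: "R \<ge> 0" "\<And>z. norm z > R \<Longrightarrow> f z = 0"
    using assms unfolding C1_compactly_supported_def by (metis le_less_trans norm_ge_zero not_le)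
  have "dderiv f e z = 0" if "norm z > R" for z
    by (rule dderiv_eq_0_if_locally_0[of "{z. norm z > R}"])
       (use that R in \<open>auto intro: open_Collect_less continuous_intros\<close>)
  then obtain M1 where "\<And>z. \<bar>dderiv f e z\<bar> \<le> M1"
    using assms continuous_compact_support_bounded unfolding C1_compactly_supported_def by metis
  moreover have "continuous_on UNIV f"
    using assms differentiable_at_imp_differentiable_on differentiable_imp_continuous_on
    unfolding C1_compactly_supported_def by blast
  then obtain M0 where "M0 \<ge> 0" "\<And>z. \<bar>f z\<bar> \<le> M0"
    using continuous_compact_support_bounded R(2) by blast
  moreover have "f (z + c *\<^sub>R e) = 0" if "\<bar>c\<bar> \<le> 1" "norm z > R + norm e" for z c
  proof -
    have "norm z - \<bar>c\<bar> * norm e \<le> norm (z + c *\<^sub>R e)"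
      using norm_triangle_ineq2[of z "- (c *\<^sub>R e)"] by simp
    moreover have "\<bar>c\<bar> * norm e \<le> norm e" using that(1) by (simp add: mult_left_le_one_le)
    ultimately show ?thesis using that(2) R(2) by simp
  qed
  ultimately show ?thesis
    using that[of "max M0 M1" "R + norm e"] by (meson max.coboundedI1 max.coboundedI2 order_trans)
qed

lemma integral_mult_difference_quotient_eq_0:
  fixes f h :: "'a::euclidean_space \<Rightarrow> real"
  assumes "h \<in> borel_measurable borel" "f \<in> borel_measurable borel" "\<And>z s. h (z + s *\<^sub>R e) = h z"
    and "integrable lborel (\<lambda>z. h z * f z)" "integrable lborel (\<lambda>z. h z * f (z + t *\<^sub>R e))"
  shows "(\<integral>z. h z * ((f (z + t *\<^sub>R e) - f z) / t) \<partial>lborel) = 0"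
proof -
  have "(\<integral>z. h z * ((f (z + t *\<^sub>R e) - f z) / t) \<partial>lborel)
      = ((\<integral>z. h z * f (z + t *\<^sub>R e) \<partial>lborel) - (\<integral>z. h z * f z \<partial>lborel)) / t"
    using assms(4,5) by (simp add: right_diff_distrib diff_divide_distrib)
  also have "\<dots> = 0"
    using integral_mult_translate[OF assms(1-3)] by simp
  finally show ?thesis .
qed

text \<open>Difference quotients integrate to zero by translation invariance of \<open>h\<close>; dominated convergence
  passes to the limit, so no regularity of \<open>h\<close> is needed (it will be a truncation of \<open>\<partial>\<^sub>qV\<close>).\<close>

lemma
  fixes f h :: "'a::euclidean_space \<Rightarrow> real"
  assumes f: "C1_compactly_supported f"
    and h_meas: "h \<in> borel_measurable lborel"
    and h_bdd: "\<And>B. \<exists>C. \<forall>z. norm z \<le> B \<longrightarrow> \<bar>h z\<bar> \<le> C"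
    and h_inv: "\<And>z t. h (z + t *\<^sub>R e) = h z"
  shows integrable_mult_dderiv: "integrable lborel (\<lambda>z. h z * dderiv f e z)"
    and integral_mult_dderiv_eq_0: "(\<integral>z. h z * dderiv f e z \<partial>lborel) = 0"
proof -
  have f_diff: "\<And>z. f differentiable (at z)" and f_cont: "continuous_on UNIV (dderiv f e)"
    using f unfolding C1_compactly_supported_def by blast+
  obtain B M where M: "M \<ge> 0" "\<And>z. \<bar>f z\<bar> \<le> M" "\<And>z. \<bar>dderiv f e z\<bar> \<le> M"
    and shift0: "\<And>z c. \<bar>c\<bar> \<le> 1 \<Longrightarrow> norm z > B \<Longrightarrow> f (z + c *\<^sub>R e) = 0"
    by (rule C1_compactly_supported_bounds[OF f]) (rule that)
  obtain C where C: "\<And>z. norm z \<le> B \<Longrightarrow> \<bar>h z\<bar> \<le> C" using h_bdd[of B] by blast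
  have f_cont': "continuous_on UNIV f"
    using f_diff differentiable_at_imp_differentiable_on differentiable_imp_continuous_on by blast
  have [measurable]: "h \<in> borel_measurable borel" "f \<in> borel_measurable borel"
    "dderiv f e \<in> borel_measurable borel" "(\<lambda>z. f (z + c *\<^sub>R e)) \<in> borel_measurable borel" for c
    using h_meas borel_measurable_continuous_onI[OF f_cont'] borel_measurable_continuous_onI[OF f_cont]
    by (auto intro!: borel_measurable_continuous_onI continuous_on_compose2[OF f_cont'] continuous_intros)
  have shift_int: "integrable lborel (\<lambda>z. h z * f (z + c *\<^sub>R e))" if "\<bar>c\<bar> \<le> 1" for c
  proof (rule integrable_bounded_support[where K="\<bar>C\<bar> * M" and B=B])
    show "\<bar>h z * f (z + c *\<^sub>R e)\<bar> \<le> \<bar>C\<bar> * M * indicator (cball 0 B) z" for z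
      using C[of z] M(2)[of "z + c *\<^sub>R e"] shift0[OF that, of z]
      by (cases "norm z \<le> B") (auto simp: abs_mult intro: mult_mono)
  qed simp
  define t where "t n = 1 / real (Suc n)" for n
  have t: "0 < t n" "t n \<le> 1" for n by (auto simp: t_def)
  have "filterlim t (at_right 0) sequentially"
    unfolding t_def by (intro tendsto_imp_filterlim_at_right LIMSEQ_Suc[OF lim_inverse_n']) auto
  then have t_lim: "filterlim t (at 0) sequentially"
    by (rule filterlim_mono[OF _ at_within_le_at order_refl])
  define Q where "Q n z = h z * ((f (z + t n *\<^sub>R e) - f z) / t n)" for n z
  have Q_meas: "Q n \<in> borel_measurable lborel" for n unfolding Q_def by simp
  have Q_bound: "\<bar>Q n z\<bar> \<le> \<bar>C\<bar> * M * indicator (cball 0 B) z" for n z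
  proof (cases "norm z \<le> B")
    case True
    have "\<bar>(f (z + t n *\<^sub>R e) - f z) / t n\<bar> \<le> M"
      using abs_difference_quotient_le[OF f_diff M(3) t(1)] t(1)[of n] by (simp add: divide_le_eq)
    then have "\<bar>h z\<bar> * \<bar>(f (z + t n *\<^sub>R e) - f z) / t n\<bar> \<le> \<bar>C\<bar> * M"
      using C[OF True] M(1) by (intro mult_mono) auto
    then show ?thesis using True unfolding Q_def abs_mult by simp
  qed (use shift0[of "t n" z] shift0[of 0 z] t[of n] in \<open>simp add: Q_def\<close>)
  have Q_lim: "(\<lambda>n. Q n z) \<longlonglongrightarrow> h z * dderiv f e z" for z
    unfolding Q_def by (intro tendsto_mult tendsto_const difference_quotient_tendsto_dderiv f_diff t_lim)
  have Q_int: "integral\<^sup>L lborel (Q n) = 0" for n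
    unfolding Q_def using shift_int[of 0] shift_int[of "t n"] t[of n]
    by (intro integral_mult_difference_quotient_eq_0 h_inv) auto
  have dom: "integrable lborel (\<lambda>z. \<bar>C\<bar> * M * indicator (cball (0::'a) B) z)"
    by (rule integrable_bounded_support[where K="\<bar>C\<bar> * M" and B=B]) (use M in \<open>auto simp: indicator_def\<close>)
  show "integrable lborel (\<lambda>z. h z * dderiv f e z)"
    by (rule integrable_dominated_convergence[where s=Q, OF _ Q_meas dom]) (use Q_lim Q_bound in auto)
  have "(\<lambda>n. integral\<^sup>L lborel (Q n)) \<longlonglongrightarrow> (\<integral>z. h z * dderiv f e z \<partial>lborel)"
    by (rule integral_dominated_convergence[where s=Q, OF _ Q_meas dom]) (use Q_lim Q_bound in auto)
  then show "(\<integral>z. h z * dderiv f e z \<partial>lborel) = 0"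
    unfolding Q_int by (simp add: LIMSEQ_const_iff)
qed

section \<open>The momentum bound\<close>

lemma has_derivative_Re_cnj_mult:
  assumes "f differentiable (at z)" "g differentiable (at z)"
  shows "((\<lambda>z. Re (cnj (f z) * g z)) has_derivative
          (\<lambda>h. Re (cnj (f z) * dderiv g h z) + Re (cnj (g z) * dderiv f h z))) (at z)"
proof -
  have "((\<lambda>z. cnj (f z) * g z) has_derivative
          (\<lambda>h. cnj (f z) * dderiv g h z + cnj (dderiv f h z) * g z)) (at z)"
    by (intro has_derivative_mult has_derivative_cnj has_derivative_dderiv assms)
  from bounded_linear.has_derivative[OF bounded_linear_Re this] show ?thesis
    by (simp add: algebra_simps)
qed

lemma differentiable_Re_cnj_mult:
  "f differentiable (at z) \<Longrightarrow> g differentiable (at z) \<Longrightarrow> (\<lambda>z. Re (cnj (f z) * g z)) differentiable (at z)"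
  using has_derivative_Re_cnj_mult differentiable_def by blast

lemma dderiv_Re_cnj_mult:
  "f differentiable (at z) \<Longrightarrow> g differentiable (at z) \<Longrightarrow>
    dderiv (\<lambda>z. Re (cnj (f z) * g z)) e z = Re (cnj (f z) * dderiv g e z) + Re (cnj (g z) * dderiv f e z)"
  using has_derivative_Re_cnj_mult has_derivative_imp_dderiv by blast

lemma test_fun_support:
  fixes u :: "(real^'n::finite) \<times> (real^'n) \<Rightarrow> complex"
  assumes "test_fun u"
  obtains R where "\<And>z. norm z > R \<Longrightarrow> u z = 0" "\<And>z v. norm z > R \<Longrightarrow> dderiv u v z = 0"
proof -
  obtain R where R: "\<And>z. norm z > R \<Longrightarrow> u z = 0" using assms unfolding test_fun_def by blast
  have "dderiv u v z = 0" if "norm z > R" for z v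
    by (rule dderiv_eq_0_if_locally_0[of "{z. norm z > R}"])
       (use that R in \<open>auto intro: open_Collect_less continuous_intros\<close>)
  then show ?thesis using that R by blast
qed

lemma C1_compactly_supported_Re_cnj_mult:
  assumes f: "smooth_on UNIV f" and g: "smooth_on UNIV g" and supp: "\<And>z. norm z > R \<Longrightarrow> f z = 0"
  shows "C1_compactly_supported (\<lambda>z. Re (cnj (f z) * g z))"
proof -
  have diff: "f differentiable (at z)" "g differentiable (at z)" for z
    using f g smooth_on_imp_differentiable by blast+
  have "continuous_on UNIV (\<lambda>z. Re (cnj (f z) * dderiv g e z) + Re (cnj (g z) * dderiv f e z))" for e
    using f g by (intro continuous_intros smooth_on_imp_continuous_on continuous_on_dderiv)
  then show ?thesis
    unfolding C1_compactly_supported_def dderiv_Re_cnj_mult[OF diff, abs_def]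
    using differentiable_Re_cnj_mult[OF diff] supp by (auto intro!: exI[of _ R])
qed

lemma cmod_square_eq_Re_cnj_mult: "(\<lambda>z. (cmod (u z))^2) = (\<lambda>z. Re (cnj (u z) * u z))"
  unfolding cmod_power2 by (simp add: power2_eq_square)

lemma dderiv_cmod_square:
  assumes "u differentiable (at z)"
  shows "dderiv (\<lambda>z. (cmod (u z))^2) e z = 2 * Re (cnj (u z) * dderiv u e z)"
  unfolding cmod_square_eq_Re_cnj_mult dderiv_Re_cnj_mult[OF assms assms] by simp

lemma abs_Re_cnj_mult_le: "2 * \<bar>Re (cnj a * b)\<bar> \<le> (cmod a)^2 + (cmod b)^2"
proof -
  have "0 \<le> (cmod (a - b))^2" "0 \<le> (cmod (a + b))^2" by simp_all
  then show ?thesis unfolding cmod_power2 by (simp add: power2_eq_square algebra_simps split: abs_split)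
qed

text \<open>Apart from \<open>|\<partial>\<^sub>pu|\<^sup>2 + |p|\<^sup>2 |u|\<^sup>2\<close>, every term on the right is a derivative in a direction
  along which its weight is constant, and integrates to zero.\<close>

lemma Re_cnj_mult_KV:
  fixes V :: "real^'n::finite \<Rightarrow> real"
  assumes u: "smooth_on UNIV u"
  defines "F \<equiv> \<lambda>z. (cmod (u z))^2"
  shows "2 * Re (cnj (u z) * KV V u z)
      = (\<Sum>i\<in>UNIV. snd z $ i * dderiv F (axis i 1, 0) z)
      - (\<Sum>i\<in>UNIV. dderiv V (axis i 1) (fst z) * dderiv F (0, axis i 1) z)
      - (\<Sum>i\<in>UNIV. dderiv (\<lambda>z. Re (cnj (u z) * dp i u z)) (0, axis i 1) z)
      + (\<Sum>i\<in>UNIV. (cmod (dp i u z))^2) + (norm (snd z))^2 * F z"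
proof -
  have du: "u differentiable (at z)" "dp i u differentiable (at z)" for i
    using u smooth_on_dderiv smooth_on_imp_differentiable unfolding dp_def by blast+
  have dF: "dderiv F e z = 2 * Re (cnj (u z) * dderiv u e z)" for e
    unfolding F_def using dderiv_cmod_square[OF du(1)] .
  have dw: "dderiv (\<lambda>z. Re (cnj (u z) * dp i u z)) (0, axis i 1) z
      = Re (cnj (u z) * dp i (dp i u) z) + (cmod (dp i u z))^2" for i
    using dderiv_Re_cnj_mult[OF du(1) du(2)] unfolding dp_def cmod_power2
    by (simp add: power2_eq_square)
  show ?thesis
    unfolding KV_apply dF dw dq_def[symmetric] dp_def[symmetric] unfolding F_def cmod_power2
    by (simp add: power2_eq_square Re_sum sum_distrib_left sum_subtractf sum.distrib sum_divide_distrib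
        add_divide_distrib algebra_simps)
qed

lemma continuous_on_compl_0_bounded_annulus:
  fixes g :: "'a::euclidean_space \<Rightarrow> real"
  assumes "continuous_on (UNIV - {0}) g" "r > 0"
  obtains C where "\<And>q. r \<le> norm q \<Longrightarrow> norm q \<le> B \<Longrightarrow> \<bar>g q\<bar> \<le> C"
proof -
  let ?K = "{q::'a. r \<le> norm q} \<inter> cball 0 B"
  have "compact ?K" by (intro closed_Int_compact closed_Collect_le compact_cball continuous_intros)
  moreover have "continuous_on ?K g" using assms by (auto intro: continuous_on_subset)
  ultimately have "bounded (g ` ?K)" using compact_continuous_image compact_imp_bounded by blast
  then obtain C where "\<forall>x\<in>?K. \<bar>g x\<bar> \<le> C" unfolding bounded_iff by (metis image_eqI real_norm_def)
  then show ?thesis by (intro that[of C]) auto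
qed

lemma integral_truncated_potential_term_eq_0:
  fixes V :: "real^'n::finite \<Rightarrow> real" and F :: "(real^'n) \<times> (real^'n) \<Rightarrow> real"
  assumes V: "smooth_on (UNIV - {0}) V" and F: "C1_compactly_supported F" and r: "r > 0"
  defines "S \<equiv> {q::real^'n. r \<le> norm q} \<union> {0}"
  shows "(\<integral>z. indicator S (fst z) * (\<Sum>i\<in>UNIV. dderiv V (axis i 1) (fst z) * dderiv F (0, axis i 1) z)
           \<partial>lborel) = 0"
proof -
  have V_cont: "continuous_on (UNIV - {0}) (dderiv V (axis i 1))" for i
    using continuous_on_dderiv[OF V] .
  define h where "h i z = indicator S (fst z) * dderiv V (axis i 1) (fst z)"
    for i and z :: "(real^'n) \<times> (real^'n)"
  have h_bdd: "\<exists>C. \<forall>z. norm z \<le> B \<longrightarrow> \<bar>h i z\<bar> \<le> C" for i B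
  proof -
    obtain C where C: "\<And>q. r \<le> norm q \<Longrightarrow> norm q \<le> B \<Longrightarrow> \<bar>dderiv V (axis i 1) q\<bar> \<le> C"
      using continuous_on_compl_0_bounded_annulus[OF V_cont r] by blast
    have "\<bar>h i z\<bar> \<le> max C \<bar>dderiv V (axis i 1) 0\<bar>" if "norm z \<le> B" for z
      using C[of "fst z"] norm_fst_le[of "fst z" "snd z"] that
      by (cases "fst z = 0") (auto simp: h_def S_def indicator_def)
    then show ?thesis by blast
  qed
  have [measurable]: "S \<in> sets borel"
    unfolding S_def by (intro borel_closed closed_Un closed_Collect_le) (auto intro: continuous_intros)
  have [measurable]: "dderiv V (axis i 1) \<in> borel_measurable borel" for i
    using borel_measurable_continuous_on_compl_point[OF V_cont] .
  have h_meas: "h i \<in> borel_measurable lborel" for i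
    unfolding h_def[abs_def]
    by (rule borel_measurable_comp_fst[where g="\<lambda>q. indicator S q * dderiv V (axis i 1) q"]) measurable
  have h_inv: "h i (z + t *\<^sub>R (0, axis i 1)) = h i z" for i z t
    by (simp add: h_def)
  have "integrable lborel (\<lambda>z. h i z * dderiv F (0, axis i 1) z)"
    and "(\<integral>z. h i z * dderiv F (0, axis i 1) z \<partial>lborel) = 0" for i
    using integrable_mult_dderiv[OF F h_meas h_bdd h_inv] integral_mult_dderiv_eq_0[OF F h_meas h_bdd h_inv]
    by blast+
  moreover have "indicator S (fst z) * (\<Sum>i\<in>UNIV. dderiv V (axis i 1) (fst z) * dderiv F (0, axis i 1) z)
      = (\<Sum>i\<in>UNIV. h i z * dderiv F (0, axis i 1) z)" for z
    by (simp add: h_def sum_distrib_left mult.assoc)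
  ultimately show ?thesis by simp
qed

text \<open>\<open>V\<close> is smooth only away from \<open>q = 0\<close>, so \<open>\<partial>\<^sub>qV\<close> need not be locally bounded: the
  truncations above converge everywhere (the point \<open>q = 0\<close> is kept in every \<open>S\<close>), and dominated
  convergence applies because the full integrand is assumed integrable.\<close>

lemma integral_potential_term_eq_0:
  fixes V :: "real^'n::finite \<Rightarrow> real" and F :: "(real^'n) \<times> (real^'n) \<Rightarrow> real"
  assumes V: "smooth_on (UNIV - {0}) V" and F: "C1_compactly_supported F"
    and W_int: "integrable lborel (\<lambda>z. \<Sum>i\<in>UNIV. dderiv V (axis i 1) (fst z) * dderiv F (0, axis i 1) z)"
  shows "(\<integral>z. (\<Sum>i\<in>UNIV. dderiv V (axis i 1) (fst z) * dderiv F (0, axis i 1) z) \<partial>lborel) = 0"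
proof -
  define W where "W z = (\<Sum>i\<in>UNIV. dderiv V (axis i 1) (fst z) * dderiv F (0, axis i 1) z)" for z
  define S where "S n = {q::real^'n. 1 / real (Suc n) \<le> norm q} \<union> {0}" for n
  have [measurable]: "S n \<in> sets borel" for n
    unfolding S_def by (intro borel_closed closed_Un closed_Collect_le) (auto intro: continuous_intros)
  have S_meas: "(\<lambda>z::(real^'n)\<times>(real^'n). indicator (S n) (fst z) :: real) \<in> borel_measurable lborel" for n
    by (rule borel_measurable_comp_fst) measurable
  have W_meas: "W \<in> borel_measurable lborel"
    using W_int unfolding W_def[symmetric] by (rule borel_measurable_integrable)
  have eventually_in_S: "\<forall>\<^sub>F n in sequentially. fst z \<in> S n" for z
  proof (cases "fst z = 0")
    case False
    then obtain N where N: "inverse (real (Suc N)) < norm (fst z)"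
      using reals_Archimedean[of "norm (fst z)"] by auto
    have "1 / real (Suc n) \<le> inverse (real (Suc N))" if "N \<le> n" for n
      using that by (simp add: inverse_eq_divide frac_le)
    then show ?thesis unfolding eventually_sequentially S_def using N by force
  qed (simp add: S_def)
  have "(\<lambda>n. indicator (S n) (fst z) * W z) \<longlonglongrightarrow> W z" for z
    by (rule tendsto_eventually) (use eventually_in_S[of z] in \<open>eventually_elim, simp\<close>)
  moreover have "(\<lambda>z. indicator (S n) (fst z) * W z) \<in> borel_measurable lborel" for n
    using S_meas W_meas by measurable
  ultimately have "(\<lambda>n. \<integral>z. indicator (S n) (fst z) * W z \<partial>lborel) \<longlonglongrightarrow> integral\<^sup>L lborel W"
    using W_int unfolding W_def[symmetric]
    by (intro integral_dominated_convergence[where w="\<lambda>z. \<bar>W z\<bar>" and s="\<lambda>n z. indicator (S n) (fst z) * W z"])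
       (auto simp: indicator_def)
  moreover have "(\<integral>z. indicator (S n) (fst z) * W z \<partial>lborel) = 0" for n
    unfolding S_def W_def by (rule integral_truncated_potential_term_eq_0[OF V F]) simp
  ultimately show ?thesis unfolding W_def[symmetric] by (simp add: LIMSEQ_const_iff)
qed

lemma integrable_Re_cnj_mult:
  assumes "f \<in> borel_measurable lborel" "g \<in> borel_measurable lborel"
    and "integrable lborel (\<lambda>z. (cmod (f z))^2)" "integrable lborel (\<lambda>z. (cmod (g z))^2)"
  shows "integrable lborel (\<lambda>z. 2 * Re (cnj (f z) * g z))"
proof (rule Bochner_Integration.integrable_bound[OF Bochner_Integration.integrable_add[OF assms(3,4)]])
  have [measurable]: "f \<in> borel_measurable borel" "g \<in> borel_measurable borel" using assms(1,2) by simp_all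
  have "(\<lambda>z. 2 * Re (cnj (f z) * g z)) = (\<lambda>z. 2 * (Re (f z) * Re (g z) + Im (f z) * Im (g z)))"
    by (simp add: fun_eq_iff)
  then show "(\<lambda>z. 2 * Re (cnj (f z) * g z)) \<in> borel_measurable lborel" by simp
  have "\<bar>2 * Re (cnj (f z) * g z)\<bar> \<le> (cmod (f z))^2 + (cmod (g z))^2" for z
    using abs_Re_cnj_mult_le[of "f z" "g z"] unfolding abs_mult by simp
  then show "AE z in lborel. norm (2 * Re (cnj (f z) * g z)) \<le> norm ((cmod (f z))^2 + (cmod (g z))^2)"
    by (intro AE_I2) (metis abs_ge_self order_trans real_norm_def)
qed

lemma
  fixes F :: "(real^'n::finite) \<times> (real^'n) \<Rightarrow> real"
  assumes F: "C1_compactly_supported F"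
  shows integrable_momentum_mult_dderiv_q: "integrable lborel (\<lambda>z. snd z $ i * dderiv F (axis i 1, 0) z)"
    and integral_momentum_mult_dderiv_q_eq_0: "(\<integral>z. snd z $ i * dderiv F (axis i 1, 0) z \<partial>lborel) = 0"
    and integrable_dderiv_p: "integrable lborel (dderiv F (0, axis i 1))"
    and integral_dderiv_p_eq_0: "integral\<^sup>L lborel (dderiv F (0, axis i 1)) = 0"
proof -
  have p_meas: "(\<lambda>z::(real^'n) \<times> (real^'n). snd z $ i) \<in> borel_measurable lborel"
    by (intro borel_measurable_lborel_continuous continuous_intros)
  have p_bdd: "\<exists>C. \<forall>z::(real^'n) \<times> (real^'n). norm z \<le> B \<longrightarrow> \<bar>snd z $ i\<bar> \<le> C" for B
    by (rule exI[of _ B]) (metis component_le_norm_cart norm_snd_le order_trans prod.collapse)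
  show "integrable lborel (\<lambda>z. snd z $ i * dderiv F (axis i 1, 0) z)"
    "(\<integral>z. snd z $ i * dderiv F (axis i 1, 0) z \<partial>lborel) = 0"
    using integrable_mult_dderiv[OF F p_meas p_bdd] integral_mult_dderiv_eq_0[OF F p_meas p_bdd] by simp_all
  have one_bdd: "\<exists>C. \<forall>z::(real^'n) \<times> (real^'n). norm z \<le> B \<longrightarrow> \<bar>1::real\<bar> \<le> C" for B by auto
  show "integrable lborel (dderiv F (0, axis i 1))" "integral\<^sup>L lborel (dderiv F (0, axis i 1)) = 0"
    using integrable_mult_dderiv[OF F borel_measurable_const one_bdd]
      integral_mult_dderiv_eq_0[OF F borel_measurable_const one_bdd] by simp_all
qed

lemma test_fun_dp: "test_fun u \<Longrightarrow> test_fun (dp i u)"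
  unfolding dp_def
  by (metis smooth_on_dderiv test_fun_def test_fun_support)

lemma integrable_mult_cmod_square:
  fixes u :: "(real^'n::finite) \<times> (real^'n) \<Rightarrow> complex"
  assumes u: "test_fun u" and w: "continuous_on UNIV w"
  shows "integrable lborel (\<lambda>z. w z * (cmod (u z))^2)"
proof -
  obtain R where "\<And>z. norm z > R \<Longrightarrow> u z = 0" using u unfolding test_fun_def by blast
  moreover have "continuous_on UNIV u" using u smooth_on_imp_continuous_on unfolding test_fun_def by blast
  ultimately show ?thesis
    using w by (intro integrable_continuous_compact_support[where R=R] continuous_intros) auto
qed

lemma
  fixes V :: "real^'n::finite \<Rightarrow> real"
  assumes V: "smooth_on (UNIV - {0}) V" and u: "test_fun u"
    and K_int: "integrable lborel (\<lambda>z. (cmod (KV V u z))^2)"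
  shows integrable_Re_cnj_mult_KV: "integrable lborel (\<lambda>z. 2 * Re (cnj (u z) * KV V u z))"
    and integral_Re_cnj_mult_KV: "(\<integral>z. 2 * Re (cnj (u z) * KV V u z) \<partial>lborel)
           = (\<integral>z. (\<Sum>i\<in>UNIV. (cmod (dp i u z))^2) \<partial>lborel)
             + (\<integral>z. (norm (snd z))^2 * (cmod (u z))^2 \<partial>lborel)"
proof -
  obtain R where R: "\<And>z. norm z > R \<Longrightarrow> u z = 0" using u unfolding test_fun_def by blast
  have us: "smooth_on UNIV u" using u unfolding test_fun_def by blast
  define F where "F z = (cmod (u z))^2" for z
  define X where "X z = 2 * Re (cnj (u z) * KV V u z)" for z
  define T where "T i z = snd z $ i * dderiv F (axis i 1, 0) z" for i z
  define W where "W z = (\<Sum>i\<in>UNIV. dderiv V (axis i 1) (fst z) * dderiv F (0, axis i 1) z)" for z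
  define L where "L i z = dderiv (\<lambda>z. Re (cnj (u z) * dp i u z)) (0, axis i 1) z" for i z
  define A where "A z = (\<Sum>i\<in>UNIV. (cmod (dp i u z))^2)" for z
  define P where "P z = (norm (snd z))^2 * (cmod (u z))^2" for z :: "(real^'n) \<times> (real^'n)"
  have F: "C1_compactly_supported F"
    unfolding F_def[abs_def] cmod_square_eq_Re_cnj_mult by (rule C1_compactly_supported_Re_cnj_mult[OF us us R])
  have "C1_compactly_supported (\<lambda>z. Re (cnj (u z) * dp i u z))" for i
    unfolding dp_def by (rule C1_compactly_supported_Re_cnj_mult[OF us smooth_on_dderiv[OF us] R])
  then have L: "integrable lborel (L i)" "integral\<^sup>L lborel (L i) = 0" for i
    unfolding L_def[abs_def] by (simp_all add: integrable_dderiv_p integral_dderiv_p_eq_0)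
  have T: "integrable lborel (T i)" "integral\<^sup>L lborel (T i) = 0" for i
    unfolding T_def[abs_def]
    by (simp_all add: F integrable_momentum_mult_dderiv_q integral_momentum_mult_dderiv_q_eq_0)
  have A: "integrable lborel A"
    unfolding A_def using integrable_mult_cmod_square[OF test_fun_dp[OF u], of "\<lambda>_. 1"] by simp
  have P: "integrable lborel P"
    unfolding P_def[abs_def] by (intro integrable_mult_cmod_square u continuous_intros)
  show X: "integrable lborel (\<lambda>z. 2 * Re (cnj (u z) * KV V u z))"
    using integrable_mult_cmod_square[OF u, of "\<lambda>_. 1"] smooth_on_imp_continuous_on[OF us]
    by (intro integrable_Re_cnj_mult borel_measurable_lborel_continuous borel_measurable_KV V us K_int) auto
  have ident: "X z = (\<Sum>i\<in>UNIV. T i z) - W z - (\<Sum>i\<in>UNIV. L i z) + A z + P z" for z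
    unfolding X_def T_def W_def L_def A_def P_def F_def[abs_def]
    using Re_cnj_mult_KV[OF us, where V=V and z=z] by simp
  have "W = (\<lambda>z. (\<Sum>i\<in>UNIV. T i z) - (\<Sum>i\<in>UNIV. L i z) + A z + P z - X z)"
    using ident by (auto simp: fun_eq_iff)
  then have W_int: "integrable lborel W" using T L A P X unfolding X_def by simp
  have "integral\<^sup>L lborel W = 0"
    using integral_potential_term_eq_0[OF V F] W_int unfolding W_def by simp
  then have "integral\<^sup>L lborel X
      = (\<Sum>i\<in>UNIV. integral\<^sup>L lborel (T i)) - integral\<^sup>L lborel W - (\<Sum>i\<in>UNIV. integral\<^sup>L lborel (L i))
        + integral\<^sup>L lborel A + integral\<^sup>L lborel P"
    unfolding ident using T L A P W_int
    by (simp add: Bochner_Integration.integral_sum Bochner_Integration.integrable_sum)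
  also have "\<dots> = integral\<^sup>L lborel A + integral\<^sup>L lborel P"
    using T L \<open>integral\<^sup>L lborel W = 0\<close> by simp
  finally show "(\<integral>z. 2 * Re (cnj (u z) * KV V u z) \<partial>lborel)
      = (\<integral>z. (\<Sum>i\<in>UNIV. (cmod (dp i u z))^2) \<partial>lborel) + (\<integral>z. (norm (snd z))^2 * (cmod (u z))^2 \<partial>lborel)"
    unfolding X_def A_def P_def .
qed

theorem L2sq_momentum_le:
  fixes V :: "real^'n::finite \<Rightarrow> real"
  assumes V: "smooth_on (UNIV - {0}) V" and u: "test_fun u"
  shows "(\<integral>\<^sup>+z. ennreal ((norm (snd z))^2 * (cmod (u z))^2) \<partial>lborel) \<le> L2sq (KV V u) + L2sq u"
proof (cases "L2sq (KV V u) = \<infinity>")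
  case False
  have us: "smooth_on UNIV u" using u unfolding test_fun_def by blast
  have K_int: "integrable lborel (\<lambda>z. (cmod (KV V u z))^2)"
    using False borel_measurable_KV[OF V us]
    by (simp add: integrable_iff_bounded L2sq_def top.not_eq_extremum)
  have u2: "integrable lborel (\<lambda>z. (cmod (u z))^2)"
    using integrable_mult_cmod_square[OF u, of "\<lambda>_. 1"] by simp
  have P: "integrable lborel (\<lambda>z. (norm (snd z))^2 * (cmod (u z))^2)"
    by (intro integrable_mult_cmod_square u continuous_intros)
  have "(\<integral>z. (norm (snd z))^2 * (cmod (u z))^2 \<partial>lborel) \<le> (\<integral>z. 2 * Re (cnj (u z) * KV V u z) \<partial>lborel)"
    unfolding integral_Re_cnj_mult_KV[OF V u K_int]
    by (simp add: integral_nonneg_AE sum_nonneg)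
  also have "\<dots> \<le> (\<integral>z. (cmod (KV V u z))^2 + (cmod (u z))^2 \<partial>lborel)"
    using abs_Re_cnj_mult_le
    by (intro integral_mono integrable_Re_cnj_mult_KV[OF V u K_int] Bochner_Integration.integrable_add K_int u2)
       (smt (verit) add.commute)
  also have "\<dots> = (\<integral>z. (cmod (KV V u z))^2 \<partial>lborel) + (\<integral>z. (cmod (u z))^2 \<partial>lborel)"
    using K_int u2 by simp
  finally have "ennreal (\<integral>z. (norm (snd z))^2 * (cmod (u z))^2 \<partial>lborel)
      \<le> ennreal (\<integral>z. (cmod (KV V u z))^2 \<partial>lborel) + ennreal (\<integral>z. (cmod (u z))^2 \<partial>lborel)"
    by (simp add: integral_nonneg_AE flip: ennreal_plus)
  then show ?thesis
    using P K_int u2 unfolding L2sq_def by (simp add: nn_integral_eq_integral)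
qed simp

section \<open>Dyadic partitions\<close>

lemma dderiv_le_if_compact_support:
  fixes f :: "'a::euclidean_space \<Rightarrow> real"
  assumes f: "smooth_on UNIV f" and supp: "\<And>q. norm q > R \<Longrightarrow> f q = 0"
  shows "\<exists>M\<ge>0. \<forall>q p. \<bar>dderiv f p q\<bar> \<le> M * norm p"
proof -
  have "\<exists>M\<ge>0. \<forall>q. \<bar>dderiv f b q\<bar> \<le> M" for b
  proof -
    have "dderiv f b q = 0" if "norm q > R" for q
      by (rule dderiv_eq_0_if_locally_0[of "{x. norm x > R}"])
         (use that supp in \<open>auto intro: open_Collect_less continuous_intros\<close>)
    then show ?thesis using continuous_compact_support_bounded[OF continuous_on_dderiv[OF f]] by metis
  qed
  then obtain M where M: "\<And>b. M b \<ge> 0" "\<And>b q. \<bar>dderiv f b q\<bar> \<le> M b" by metis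
  have "\<bar>dderiv f p q\<bar> \<le> (\<Sum>b\<in>Basis. M b) * norm p" for p q
  proof -
    have "dderiv f p q = dderiv f (\<Sum>b\<in>Basis. (p \<bullet> b) *\<^sub>R b) q" by (simp add: euclidean_representation)
    also have "\<dots> = (\<Sum>b\<in>Basis. (p \<bullet> b) * dderiv f b q)"
      using smooth_on_imp_differentiable[OF f UNIV_I]
      by (simp add: linear_sum[OF dderiv_linear] linear_scale[OF dderiv_linear])
    finally have "\<bar>dderiv f p q\<bar> \<le> (\<Sum>b\<in>Basis. \<bar>p \<bullet> b\<bar> * \<bar>dderiv f b q\<bar>)"
      by (simp add: sum_abs[THEN order_trans] abs_mult)
    also have "\<dots> \<le> (\<Sum>b\<in>Basis. norm p * M b)"
      by (intro sum_mono mult_mono) (auto simp: Basis_le_norm M)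
    finally show ?thesis by (simp add: sum_distrib_left mult.commute)
  qed
  then show ?thesis using M(1) by (meson sum_nonneg)
qed

lemma dderiv_radial_le:
  fixes \<phi> :: "real \<Rightarrow> real"
  assumes \<phi>: "smooth_on UNIV \<phi>" and a: "a > 0" "\<And>t. t < a \<Longrightarrow> \<phi> t = 0"
    and M: "\<And>t. \<bar>dderiv \<phi> 1 t\<bar> \<le> M" and c: "c > 0"
  shows "\<bar>dderiv (\<lambda>q::'a::euclidean_space. \<phi> (c * norm q)) p q\<bar> \<le> M * c * norm p"
proof (cases "c * norm q < a")
  case True
  have "dderiv (\<lambda>q::'a. \<phi> (c * norm q)) p q = 0"
    by (rule dderiv_eq_0_if_locally_0[of "{x. c * norm x < a}"])
       (use True a in \<open>auto intro!: open_Collect_less continuous_intros\<close>)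
  moreover have "0 \<le> M" using M[of 0] by linarith
  ultimately show ?thesis using c by simp
next
  case False
  then have "q \<noteq> 0" using a c by auto
  have "((\<lambda>x. c * norm x) has_derivative (\<lambda>h. c * (h \<bullet> sgn q))) (at q)"
    by (rule has_derivative_mult_right[OF has_derivative_norm[OF \<open>q \<noteq> 0\<close>]])
  from has_derivative_compose[OF this has_derivative_dderiv[OF smooth_on_imp_differentiable[OF \<phi> UNIV_I]]]
  have "dderiv (\<lambda>q::'a. \<phi> (c * norm q)) p q = dderiv \<phi> (c * (p \<bullet> sgn q)) (c * norm q)"
    by (rule has_derivative_imp_dderiv)
  also have "\<dots> = c * (p \<bullet> sgn q) * dderiv \<phi> 1 (c * norm q)"
    using linear_scale[OF dderiv_linear[OF smooth_on_imp_differentiable[OF \<phi> UNIV_I]], of "c * (p \<bullet> sgn q)" 1]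
    by simp
  finally have "\<bar>dderiv (\<lambda>q::'a. \<phi> (c * norm q)) p q\<bar> = c * \<bar>p \<bullet> sgn q\<bar> * \<bar>dderiv \<phi> 1 (c * norm q)\<bar>"
    using c by (simp add: abs_mult)
  also have "\<dots> \<le> c * norm p * M"
    using Cauchy_Schwarz_ineq2[of p "sgn q"] \<open>q \<noteq> 0\<close> c M by (intro mult_mono) (auto simp: norm_sgn)
  finally show ?thesis by (simp add: mult_ac)
qed

lemma finite_profiles_dderiv_bounded:
  fixes P :: "(real \<Rightarrow> real) set"
  assumes P: "finite P" and prof: "\<And>\<phi>. \<phi> \<in> P \<Longrightarrow> smooth_on UNIV \<phi> \<and> (\<exists>a b. \<forall>t. t \<notin> {a..b} \<longrightarrow> \<phi> t = 0)"
  obtains M where "M \<ge> 0" "\<And>\<phi> t. \<phi> \<in> P \<Longrightarrow> \<bar>dderiv \<phi> 1 t\<bar> \<le> M"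
proof -
  have "\<exists>M\<ge>0. \<forall>t. \<bar>dderiv \<phi> 1 t\<bar> \<le> M" if \<phi>: "\<phi> \<in> P" for \<phi>
  proof -
    obtain a b where smooth: "smooth_on UNIV \<phi>" and ab: "\<And>t. t \<notin> {a..b} \<Longrightarrow> \<phi> t = 0"
      using prof[OF \<phi>] by blast
    have "\<phi> t = 0" if "norm t > max \<bar>a\<bar> \<bar>b\<bar>" for t by (intro ab) (use that in \<open>simp, arith\<close>)
    then obtain M where "M \<ge> 0" "\<And>t p. \<bar>dderiv \<phi> p t\<bar> \<le> M * norm p"
      using dderiv_le_if_compact_support[OF smooth] by blast
    then show ?thesis by (metis mult.right_neutral norm_one)
  qed
  then obtain M\<phi> where M\<phi>: "\<And>\<phi>. \<phi> \<in> P \<Longrightarrow> M\<phi> \<phi> \<ge> 0 \<and> (\<forall>t. \<bar>dderiv \<phi> 1 t\<bar> \<le> M\<phi> \<phi>)" by metis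
  have "\<bar>dderiv \<phi> 1 t\<bar> \<le> (\<Sum>\<psi>\<in>P. M\<phi> \<psi>)" if "\<phi> \<in> P" for \<phi> t
  proof -
    have "M\<phi> \<phi> \<le> (\<Sum>\<psi>\<in>P. M\<phi> \<psi>)" using M\<phi> P that by (intro member_le_sum) auto
    then show ?thesis using M\<phi>[OF that] order_trans by blast
  qed
  moreover have "(\<Sum>\<psi>\<in>P. M\<phi> \<psi>) \<ge> 0" using M\<phi> by (simp add: sum_nonneg)
  ultimately show ?thesis using that by blast
qed

lemma dyadic_partition_dderiv_le:
  fixes chi :: "int \<Rightarrow> real^'n::finite \<Rightarrow> real"
  assumes d: "dyadic_partition chi"
  obtains C where "C \<ge> 0"
    "\<And>j q p. j \<ge> -1 \<Longrightarrow> \<bar>dderiv (chi j) p q\<bar> \<le> C * 2 powr (- real_of_int j) * norm p"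
proof -
  have smooth: "smooth_on UNIV (chi (-1))" using d unfolding dyadic_partition_def sq_partition_def by auto
  obtain R where R: "\<And>q. norm q > R \<Longrightarrow> chi (-1) q = 0" using d unfolding dyadic_partition_def by blast
  obtain M1 where M1: "M1 \<ge> 0" "\<And>q p. \<bar>dderiv (chi (-1)) p q\<bar> \<le> M1 * norm p"
    using dderiv_le_if_compact_support[OF smooth R] by blast
  obtain P :: "(real \<Rightarrow> real) set" where P: "finite P"
    and P_prof: "\<And>\<phi>. \<phi> \<in> P \<Longrightarrow> smooth_on UNIV \<phi> \<and> (\<exists>a b. 3/4 < a \<and> b < 8/3 \<and> (\<forall>t. t \<notin> {a..b} \<longrightarrow> \<phi> t = 0))"
    and chi_P: "\<And>j. j \<ge> 0 \<Longrightarrow> \<exists>\<phi>\<in>P. \<forall>q. chi j q = \<phi> (2 powr (- real_of_int j) * norm q)"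
    using d unfolding dyadic_partition_def by blast
  obtain M where M: "M \<ge> 0" "\<And>\<phi> t. \<phi> \<in> P \<Longrightarrow> \<bar>dderiv \<phi> 1 t\<bar> \<le> M"
    using finite_profiles_dderiv_bounded[OF P] P_prof by metis
  have "\<bar>dderiv (chi j) p q\<bar> \<le> (M + M1) * 2 powr (- real_of_int j) * norm p" if j: "j \<ge> -1" for j q p
  proof (cases "j = -1")
    case True
    have "M1 * norm p \<le> (M + M1) * 2 * norm p" using M1(1) M(1) by (intro mult_right_mono) auto
    then show ?thesis using M1(2)[of p q] True by simp
  next
    case False
    then obtain \<phi> where "\<phi> \<in> P" and "\<forall>q. chi j q = \<phi> (2 powr (- real_of_int j) * norm q)"
      using chi_P[of j] j by auto
    then have chi_j: "chi j = (\<lambda>q. \<phi> (2 powr (- real_of_int j) * norm q))" by blast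
    obtain a b where "smooth_on UNIV \<phi>" "3/4 < a" "\<And>t. t \<notin> {a..b} \<Longrightarrow> \<phi> t = 0"
      using P_prof[OF \<open>\<phi> \<in> P\<close>] by blast
    then have "\<bar>dderiv (chi j) p q\<bar> \<le> M * 2 powr (- real_of_int j) * norm p"
      unfolding chi_j by (intro dderiv_radial_le[of \<phi> a] M(2) \<open>\<phi> \<in> P\<close>) auto
    also have "\<dots> \<le> (M + M1) * 2 powr (- real_of_int j) * norm p"
      using M1(1) by (intro mult_right_mono) auto
    finally show ?thesis .
  qed
  then show ?thesis using that M(1) M1(1) by (meson add_nonneg_nonneg)
qed

lemma sum_dyadic_weights_le:
  assumes "finite F" "F \<subseteq> {-1::int..}"
  shows "(\<Sum>j\<in>F. (2 powr (- real_of_int j))^2) \<le> 8"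
proof -
  have weight: "(2 powr (- real_of_int j))^2 \<le> 4 * (1/2) ^ nat (j + 1)" if "j \<in> F" for j
  proof -
    define k where "k = nat (j + 1)"
    have "real_of_int j = real k - 1" using that assms(2) by (auto simp: k_def)
    then have "2 powr (- real_of_int j) = 2 * (1/2) ^ k"
      by (simp add: powr_diff powr_realpow power_one_over)
    moreover have "((1/2) ^ k)^2 \<le> ((1::real)/2) ^ k"
      unfolding power2_eq_square by (rule mult_left_le_one_le) (auto simp: power_le_one)
    ultimately show ?thesis by (simp add: power_mult_distrib k_def)
  qed
  have inj: "inj_on (\<lambda>j. nat (j + 1)) F"
  proof (rule inj_onI)
    fix x y assume "x \<in> F" "y \<in> F" "nat (x + 1) = nat (y + 1)"
    moreover have "x \<ge> -1" "y \<ge> -1" using \<open>x \<in> F\<close> \<open>y \<in> F\<close> assms(2) by auto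
    ultimately show "x = y" by simp
  qed
  obtain N where N: "(\<lambda>j. nat (j + 1)) ` F \<subseteq> {..<N}"
    using finite_nat_bounded[OF finite_imageI[OF assms(1)]] by blast
  have "(\<Sum>j\<in>F. (2 powr (- real_of_int j))^2) \<le> 4 * (\<Sum>j\<in>F. (1/2) ^ nat (j + 1))"
    unfolding sum_distrib_left using weight by (rule sum_mono)
  also have "\<dots> = 4 * (\<Sum>k\<in>(\<lambda>j. nat (j + 1)) ` F. (1/2) ^ k)" by (simp add: sum.reindex[OF inj])
  also have "\<dots> \<le> 4 * (\<Sum>k<N. (1/2) ^ k)" by (intro mult_left_mono sum_mono2 N) auto
  also have "\<dots> \<le> 8" unfolding sum_gp_strict by (simp add: field_simps)
  finally show ?thesis .
qed

lemma comm_term_infsum_le: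
  fixes chi :: "int \<Rightarrow> real^'n::finite \<Rightarrow> real"
  assumes sq: "sq_partition chi"
    and C: "\<And>j q p. j \<ge> -1 \<Longrightarrow> \<bar>dderiv (chi j) p q\<bar> \<le> C * 2 powr (- real_of_int j) * norm p"
  shows "(\<Sum>\<^sub>\<infinity>j\<in>{-1..}. ennreal ((cmod (comm_term (chi j) u z))^2))
           \<le> ennreal (8 * C^2) * ennreal ((norm (snd z))^2 * (cmod (u z))^2)"
proof -
  obtain F where F: "finite F" "F \<subseteq> {-1..}"
    and dvanish: "\<And>j v. j \<in> {-1..} - F \<Longrightarrow> dderiv (chi j) v (fst z) = 0"
    by (rule sq_partition_local[OF sq, of "fst z"]) blast
  have diff: "chi j differentiable (at x)" if "j \<in> {-1..}" for j x
    using sq that smooth_on_imp_differentiable unfolding sq_partition_def by auto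
  have "(\<Sum>\<^sub>\<infinity>j\<in>{-1..}. ennreal ((cmod (comm_term (chi j) u z))^2))
      = ennreal ((\<Sum>j\<in>F. (dderiv (chi j) (snd z) (fst z))^2) * (cmod (u z))^2)"
    by (subst infsum_cong_neutral[where T=F])
       (use F dvanish in \<open>auto simp: comm_term_eq_dderiv[OF diff] norm_mult power_mult_distrib
          sum_distrib_right\<close>)
  also have "\<dots> \<le> ennreal (8 * C^2 * (norm (snd z))^2 * (cmod (u z))^2)"
  proof (intro ennreal_leI mult_right_mono)
    have "(\<Sum>j\<in>F. (dderiv (chi j) (snd z) (fst z))^2)
        \<le> (\<Sum>j\<in>F. (C * 2 powr (- real_of_int j) * norm (snd z))^2)"
    proof (rule sum_mono)
      fix j assume "j \<in> F"
      then have "\<bar>dderiv (chi j) (snd z) (fst z)\<bar> \<le> C * 2 powr (- real_of_int j) * norm (snd z)"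
        using C F by auto
      from power_mono[OF this abs_ge_zero, of 2]
      show "(dderiv (chi j) (snd z) (fst z))^2 \<le> (C * 2 powr (- real_of_int j) * norm (snd z))^2"
        by simp
    qed
    also have "\<dots> = C^2 * (norm (snd z))^2 * (\<Sum>j\<in>F. (2 powr (- real_of_int j))^2)"
      by (simp add: power_mult_distrib sum_distrib_left mult_ac)
    also have "\<dots> \<le> C^2 * (norm (snd z))^2 * 8"
      by (intro mult_left_mono sum_dyadic_weights_le F) auto
    finally show "(\<Sum>j\<in>F. (dderiv (chi j) (snd z) (fst z))^2) \<le> 8 * C^2 * (norm (snd z))^2"
      by (simp add: mult_ac)
  qed simp
  finally show ?thesis by (simp add: ennreal_mult' mult_ac)
qed

lemma infsum_L2sq_comm_term_le:
  fixes chi :: "int \<Rightarrow> real^'n::finite \<Rightarrow> real"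
  assumes V: "smooth_on (UNIV - {0}) V" and u: "test_fun u" and sq: "sq_partition chi"
    and C: "\<And>j q p. j \<ge> -1 \<Longrightarrow> \<bar>dderiv (chi j) p q\<bar> \<le> C * 2 powr (- real_of_int j) * norm p"
  shows "(\<Sum>\<^sub>\<infinity>j\<in>{-1..}. L2sq (comm_term (chi j) u)) \<le> ennreal (8 * C^2) * (L2sq (KV V u) + L2sq u)"
proof -
  have us: "smooth_on UNIV u" using u unfolding test_fun_def by blast
  have mC: "(\<lambda>z. ennreal ((cmod (comm_term (chi j) u z))^2)) \<in> borel_measurable lborel"
    if "j \<in> {-1..}" for j
    using sq that unfolding sq_partition_def
    by (intro borel_measurable_cmod_square borel_measurable_comm_term us) auto
  have "(\<lambda>z. (norm (snd z))^2 * (cmod (u z))^2) \<in> borel_measurable lborel"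
    using smooth_on_imp_continuous_on[OF us]
    by (intro borel_measurable_lborel_continuous continuous_intros) auto
  then have mP: "(\<lambda>z. ennreal ((norm (snd z))^2 * (cmod (u z))^2)) \<in> borel_measurable lborel"
    by measurable
  have "(\<Sum>\<^sub>\<infinity>j\<in>{-1..}. L2sq (comm_term (chi j) u))
      = (\<integral>\<^sup>+z. (\<Sum>\<^sub>\<infinity>j\<in>{-1..}. ennreal ((cmod (comm_term (chi j) u z))^2)) \<partial>lborel)"
    unfolding L2sq_def by (rule nn_integral_infsum[OF _ mC, symmetric]) simp
  also have "\<dots> \<le> (\<integral>\<^sup>+z. ennreal (8 * C^2) * ennreal ((norm (snd z))^2 * (cmod (u z))^2) \<partial>lborel)"
    by (intro nn_integral_mono comm_term_infsum_le[OF sq C])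
  also have "\<dots> = ennreal (8 * C^2) * (\<integral>\<^sup>+z. ennreal ((norm (snd z))^2 * (cmod (u z))^2) \<partial>lborel)"
    by (rule nn_integral_cmult[OF mP])
  also have "\<dots> \<le> ennreal (8 * C^2) * (L2sq (KV V u) + L2sq u)"
    by (intro mult_left_mono L2sq_momentum_le[OF V u]) simp
  finally show ?thesis .
qed

theorem L2sq_KV_cutmul_dyadic_le:
  fixes chi :: "int \<Rightarrow> real^'n::finite \<Rightarrow> real"
  assumes d: "dyadic_partition chi"
  shows "\<exists>c::real. c > 0 \<and>
          (\<forall>(V::real^'n \<Rightarrow> real) u. smooth_on (UNIV - {0}) V \<longrightarrow> test_fun u \<longrightarrow>
             ennreal (1 + 4*c) * L2sq (KV V u) + ennreal c * L2sq u
               \<ge> (\<Sum>\<^sub>\<infinity>j\<in>{-1..}. L2sq (KV V (cutmul (chi j) u))))"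
proof -
  have sq: "sq_partition chi" using d unfolding dyadic_partition_def by blast
  obtain C where C: "\<And>j q p. j \<ge> -1 \<Longrightarrow> \<bar>dderiv (chi j) p q\<bar> \<le> C * 2 powr (- real_of_int j) * norm p"
    by (rule dyadic_partition_dderiv_le[OF d]) (rule that)
  define c where "c = 8 * C^2 + 1"
  have "(\<Sum>\<^sub>\<infinity>j\<in>{-1..}. L2sq (KV V (cutmul (chi j) u))) \<le> ennreal (1 + 4*c) * L2sq (KV V u) + ennreal c * L2sq u"
    if V: "smooth_on (UNIV - {0}) V" and u: "test_fun u" for V u
  proof -
    have "(\<Sum>\<^sub>\<infinity>j\<in>{-1..}. L2sq (KV V (cutmul (chi j) u)))
        \<le> L2sq (KV V u) + ennreal (8 * C^2) * (L2sq (KV V u) + L2sq u)"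
      unfolding L2sq_KV_sum_cutmul[OF V sq u, symmetric]
      by (rule add_left_mono[OF infsum_L2sq_comm_term_le[OF V u sq C]])
    also have "\<dots> = (1 + ennreal (8 * C^2)) * L2sq (KV V u) + ennreal (8 * C^2) * L2sq u"
      by (simp add: distrib_left distrib_right add.assoc)
    also have "\<dots> \<le> ennreal (1 + 4*c) * L2sq (KV V u) + ennreal c * L2sq u"
    proof (intro add_mono mult_right_mono)
      have "1 + ennreal (8 * C^2) = ennreal (1 + 8 * C^2)" by simp
      also have "\<dots> \<le> ennreal (1 + 4*c)" by (intro ennreal_leI) (simp add: c_def)
      finally show "1 + ennreal (8 * C^2) \<le> ennreal (1 + 4*c)" .
      show "ennreal (8 * C^2) \<le> ennreal c" by (intro ennreal_leI) (simp add: c_def)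
    qed simp_all
    finally show ?thesis .
  qed
  moreover have "c > 0" by (simp add: c_def add_nonneg_pos)
  ultimately show ?thesis by blast
qed

theorem lemma2p2:
  fixes dummy :: "real^'n::finite"
  shows
   "(\<forall>(V::real^'n \<Rightarrow> real) (chi::int \<Rightarrow> real^'n \<Rightarrow> real) u.
        smooth_on (UNIV - {0}) V \<longrightarrow> sq_partition chi \<longrightarrow> test_fun u \<longrightarrow>
        L2sq (KV V u) + (\<Sum>\<^sub>\<infinity>j\<in>{-1..}. L2sq (comm_term (chi j) u))
          = (\<Sum>\<^sub>\<infinity>j\<in>{-1..}. L2sq (KV V (cutmul (chi j) u))))
    \<and>
    (\<forall>chi::int \<Rightarrow> real^'n \<Rightarrow> real. dyadic_partition chi \<longrightarrow>
       (\<exists>c::real. c > 0 \<and>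
          (\<forall>(V::real^'n \<Rightarrow> real) u. smooth_on (UNIV - {0}) V \<longrightarrow> test_fun u \<longrightarrow>
             ennreal (1 + 4*c) * L2sq (KV V u) + ennreal c * L2sq u
               \<ge> (\<Sum>\<^sub>\<infinity>j\<in>{-1..}. L2sq (KV V (cutmul (chi j) u))))))"
  using L2sq_KV_sum_cutmul L2sq_KV_cutmul_dyadic_le by blast

end
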